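(* Let $n\ge1$, $\mathcal{D}=\{u\in(0,1)^n:\sum_{i=1}^nu_i<1\}$, $u_0=1-\sum_{i=1}^nu_i$, and let $q_{ij}\ge0$, $r_{ij}=r_{ji}\ge0$ ($i,j=0,\ldots,n$) be constants with $q_{i0}=q_{0i}=r_{i0}=r_{ii}=0$. Define $q_i(u)=\sum_{j=1}^nq_{ij}u_j$, $r_i(u)=\sum_{j=1}^nr_{ij}u_j$ and, for $i,j=1,\ldots,n$, $$A_{ij}(u)=(q_i(u)-r_i(u))\delta_{ij}+u_i\Big(q_{ij}-q_j(u)+r_{ij}+r_j(u)-\sum_{\ell=1}^nu_\ell(q_{\ell j}+r_{\ell j})\Big),$$ $$(h_B''(u))_{ij}=\frac{\delta_{ij}}{u_i}+\frac1{u_0}.$$ Assume the symmetric part of $(q_{ij}+r_{ij})_{i,j=1}^n$ is positive definite with smallest eigenvalue $\alpha>0$ and $q_{ij}\ge r_{ij}$ for $i,j=1,\ldots,n$. Then $z^Th_B''(u)A(u)z\ge\alpha|z|^2$ for all $u\in\mathcal{D}$ and $z\in\mathbb{R}^n$.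
   Context: $A(u)$ is the diffusion matrix of the multiphase cross-diffusion system with unit drag coefficients written in the variables $u_1,\ldots,u_n$, and $h_B''(u)$ is the Hessian of the Boltzmann entropy density $h_B(u)=\sum_{i=0}^nu_i(\log u_i-1)$ with $u_0=1-\sum_{i=1}^nu_i$. *)

theory Defs
  imports "HOL-Analysis.Analysis"
begin

text \<open>Indices 1..n are modelled by a finite type 'n; index 0 is eliminated via u0.\<close>

definition u0 :: "real^'n \<Rightarrow> real" where
  "u0 u = 1 - (\<Sum>i\<in>UNIV. u $ i)"

definition domD :: "(real^'n) set" where
  "domD = {u. (\<forall>i. 0 < u $ i \<and> u $ i < 1) \<and> (\<Sum>i\<in>UNIV. u $ i) < 1}"

definition qfun :: "real^'n^'n \<Rightarrow> real^'n \<Rightarrow> 'n \<Rightarrow> real" where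
  "qfun q u i = (\<Sum>j\<in>UNIV. q $ i $ j * u $ j)"

definition diffA :: "real^'n^'n \<Rightarrow> real^'n^'n \<Rightarrow> real^'n \<Rightarrow> real^'n^'n" where
  "diffA q r u = (\<chi> i j.
     (if i = j then qfun q u i - qfun r u i else 0)
     + u $ i * (q $ i $ j - qfun q u j + r $ i $ j + qfun r u j
               - (\<Sum>l\<in>UNIV. u $ l * (q $ l $ j + r $ l $ j))))"

definition hessB :: "real^'n \<Rightarrow> real^'n^'n" where
  "hessB u = (\<chi> i j. (if i = j then 1 / u $ i else 0) + 1 / u0 u)"

definition pos_def :: "real^'n^'n \<Rightarrow> bool" where
  "pos_def M \<longleftrightarrow> (\<forall>x. x \<noteq> 0 \<longrightarrow> x \<bullet> (M *v x) > 0)"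

definition is_eigenvalue :: "real^'n^'n \<Rightarrow> real \<Rightarrow> bool" where
  "is_eigenvalue M c \<longleftrightarrow> (\<exists>v. v \<noteq> 0 \<and> M *v v = c *\<^sub>R v)"

definition smallest_eigenvalue :: "real^'n^'n \<Rightarrow> real \<Rightarrow> bool" where
  "smallest_eigenvalue M c \<longleftrightarrow> is_eigenvalue M c \<and> (\<forall>d. is_eigenvalue M d \<longrightarrow> c \<le> d)"

definition sym_part :: "real^'n^'n \<Rightarrow> real^'n^'n" where
  "sym_part M = (1/2) *\<^sub>R (M + transpose M)"

end

theory Submission
  imports Defs
begin

text \<open>The product \<open>h\<^sub>B''(u) A(u)\<close> simplifies to \<open>D(u) + (q\<^sub>i\<^sub>j + r\<^sub>i\<^sub>j)\<close>, where
  \<open>D(u)\<close> is diagonal with entries \<open>(q\<^sub>i(u) - r\<^sub>i(u)) / u\<^sub>i\<close>: the \<open>1/u\<^sub>0\<close> part of the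
  Hessian meets the column sums of \<open>A(u)\<close>, which all carry the factor \<open>u\<^sub>0\<close>.
  Since \<open>q\<^sub>i\<^sub>j \<ge> r\<^sub>i\<^sub>j\<close>, the diagonal part is nonnegative, and the quadratic form of
  \<open>(q\<^sub>i\<^sub>j + r\<^sub>i\<^sub>j)\<close> is that of its symmetric part, bounded below by \<open>\<alpha> |z|\<^sup>2\<close> through
  the variational characterisation of the smallest eigenvalue.\<close>

lemma linear_coeff_eq_0_if_quadratic_nonneg:
  fixes a b :: real
  assumes "\<And>t. 0 \<le> b * t + a * t\<^sup>2"
  shows "b = 0"
proof -
  have "((\<lambda>t. b * t + a * t\<^sup>2) has_real_derivative b) (at 0)"
    by (auto intro!: derivative_eq_intros)
  then show ?thesis
    by (rule DERIV_local_min[where d = 1]) (use assms in auto)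
qed

lemma symmetric_matrix_inner_commute:
  fixes S :: "real^'n^'n"
  assumes "transpose S = S"
  shows "v \<bullet> (S *v w) = w \<bullet> (S *v v)"
proof -
  have "w \<bullet> (S *v v) = (w v* S) \<bullet> v" by (simp add: dot_lmul_matrix)
  also have "w v* S = S *v w" by (metis assms transpose_matrix_vector)
  finally show ?thesis by (simp add: inner_commute)
qed

lemma quadratic_form_attains_min_on_sphere:
  fixes S :: "real^'n^'n"
  obtains v where "norm v = 1" and "\<And>x. (v \<bullet> (S *v v)) * (norm x)\<^sup>2 \<le> x \<bullet> (S *v x)"
proof -
  let ?f = "\<lambda>x. x \<bullet> (S *v x)"
  have ne: "sphere (0::real^'n) 1 \<noteq> {}"
    using vector_choose_size[of 1] by auto
  have cont: "continuous_on (sphere 0 1) ?f"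
    by (intro continuous_intros linear_continuous_on linear_linear[THEN iffD1] matrix_vector_mul_linear)
  obtain v where v: "v \<in> sphere 0 1" and min: "\<And>y. y \<in> sphere 0 1 \<Longrightarrow> ?f v \<le> ?f y"
    using continuous_attains_inf[OF compact_sphere ne cont] by blast
  have "?f v * (norm x)\<^sup>2 \<le> ?f x" for x
  proof (cases "x = 0")
    case False
    define y where "y = (1 / norm x) *\<^sub>R x"
    have xy: "x = norm x *\<^sub>R y" using False by (simp add: y_def)
    have "?f x = ?f y * (norm x)\<^sup>2"
      by (subst (1 2) xy) (simp add: matrix_vector_mult_scaleR power2_eq_square)
    moreover have "?f v \<le> ?f y" using False by (intro min) (simp add: y_def)
    ultimately show ?thesis using mult_right_mono[of "?f v" "?f y" "(norm x)\<^sup>2"] by simp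
  qed simp
  with v that show ?thesis by simp
qed

text \<open>With \<open>m = v \<bullet> S v\<close>, expanding the bound at \<open>v + t w\<close> gives a quadratic in \<open>t\<close> that is
  nonnegative and vanishes at \<open>t = 0\<close>, so its linear coefficient \<open>2 w \<bullet> (S v - m v)\<close>
  vanishes for all \<open>w\<close>.\<close>

lemma sphere_minimizer_is_eigenvector:
  fixes S :: "real^'n^'n"
  assumes sym: "transpose S = S" and v: "norm v = 1"
    and min: "\<And>x. (v \<bullet> (S *v v)) * (norm x)\<^sup>2 \<le> x \<bullet> (S *v x)"
  shows "S *v v = (v \<bullet> (S *v v)) *\<^sub>R v"
proof -
  define m where "m = v \<bullet> (S *v v)"
  have orth: "2 * (w \<bullet> (S *v v - m *\<^sub>R v)) = 0" for w
  proof (rule linear_coeff_eq_0_if_quadratic_nonneg[where a = "w \<bullet> (S *v w) - m * (norm w)\<^sup>2"])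
    fix t :: real
    have vv: "v \<bullet> v = 1" using v by (simp add: dot_square_norm)
    have "(norm (v + t *\<^sub>R w))\<^sup>2 = 1 + 2 * t * (v \<bullet> w) + t\<^sup>2 * (norm w)\<^sup>2"
      unfolding power2_norm_eq_inner
      by (simp add: inner_add vv inner_commute power2_eq_square algebra_simps)
    moreover have "(v + t *\<^sub>R w) \<bullet> (S *v (v + t *\<^sub>R w))
        = m + 2 * t * (w \<bullet> (S *v v)) + t\<^sup>2 * (w \<bullet> (S *v w))"
      using symmetric_matrix_inner_commute[OF sym, of v w]
      by (simp add: m_def matrix_vector_right_distrib matrix_vector_mult_scaleR inner_add
          power2_eq_square algebra_simps)
    moreover note min[of "v + t *\<^sub>R w", folded m_def]
    ultimately show "0 \<le> 2 * (w \<bullet> (S *v v - m *\<^sub>R v)) * t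
        + (w \<bullet> (S *v w) - m * (norm w)\<^sup>2) * t\<^sup>2"
      by (simp add: inner_diff_right inner_commute algebra_simps)
  qed
  show ?thesis using orth[of "S *v v - m *\<^sub>R v"] by (simp add: m_def)
qed

lemma quadratic_form_ge_smallest_eigenvalue:
  fixes S :: "real^'n^'n"
  assumes "transpose S = S" and "smallest_eigenvalue S a"
  shows "a * (norm x)\<^sup>2 \<le> x \<bullet> (S *v x)"
proof -
  obtain v where v: "norm v = 1" and min: "\<And>x. (v \<bullet> (S *v v)) * (norm x)\<^sup>2 \<le> x \<bullet> (S *v x)"
    using quadratic_form_attains_min_on_sphere[of S] by blast
  have "is_eigenvalue S (v \<bullet> (S *v v))"
    unfolding is_eigenvalue_def
    using sphere_minimizer_is_eigenvector[OF assms(1) v min] v by (metis norm_zero zero_neq_one)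
  then have "a \<le> v \<bullet> (S *v v)"
    using assms(2) unfolding smallest_eigenvalue_def by blast
  then show ?thesis
    using min[of x] by (meson mult_right_mono order_trans zero_le_power2)
qed

lemma transpose_sym_part: "transpose (sym_part M) = sym_part M"
  by (simp add: sym_part_def transpose_def vec_eq_iff)

lemma quadratic_form_sym_part:
  fixes M :: "real^'n^'n"
  shows "z \<bullet> (sym_part M *v z) = z \<bullet> (M *v z)"
proof -
  have "z \<bullet> (transpose M *v z) = z \<bullet> (M *v z)"
    by (simp add: inner_commute[of z] dot_lmul_matrix)
  then show ?thesis
    unfolding sym_part_def
    by (simp add: scaleR_matrix_vector_assoc[symmetric] matrix_vector_mult_add_rdistrib inner_add_right)
qed

lemma quadratic_form_diagonal_plus:
  fixes M N :: "real^'n^'n"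
  assumes "\<And>i j. M $ i $ j = (if i = j then d i else 0) + N $ i $ j"
  shows "z \<bullet> (M *v z) = (\<Sum>i\<in>UNIV. d i * (z $ i)\<^sup>2) + z \<bullet> (N *v z)"
proof -
  have "M $ i $ j * z $ j = (if j = i then d i * z $ i else 0) + N $ i $ j * z $ j" for i j
    by (simp add: assms distrib_right)
  then have row: "(\<Sum>j\<in>UNIV. M $ i $ j * z $ j) = d i * z $ i + (\<Sum>j\<in>UNIV. N $ i $ j * z $ j)" for i
    by (simp add: sum.distrib)
  show ?thesis
    unfolding inner_vec_def matrix_vector_mult_def inner_real_def
    by (simp add: row distrib_left sum.distrib power2_eq_square mult.left_commute)
qed

lemma sum_diffA_column:
  "(\<Sum>k\<in>UNIV. diffA q r u $ k $ j)
     = u0 u * (qfun q u j - qfun r u j + (\<Sum>l\<in>UNIV. u $ l * (q $ l $ j + r $ l $ j)))"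
proof -
  define c where "c = qfun q u j - qfun r u j + (\<Sum>l\<in>UNIV. u $ l * (q $ l $ j + r $ l $ j))"
  have "diffA q r u $ k $ j = (if k = j then qfun q u j - qfun r u j else 0)
      + u $ k * (q $ k $ j + r $ k $ j) - u $ k * c" for k
    by (simp add: diffA_def c_def algebra_simps)
  then have "(\<Sum>k\<in>UNIV. diffA q r u $ k $ j) = (qfun q u j - qfun r u j)
      + (\<Sum>k\<in>UNIV. u $ k * (q $ k $ j + r $ k $ j)) - (\<Sum>k\<in>UNIV. u $ k) * c"
    by (simp add: sum.distrib sum_subtractf sum_distrib_right)
  also have "\<dots> = u0 u * c" by (simp add: u0_def c_def algebra_simps)
  finally show ?thesis by (simp add: c_def)
qed

lemma hessB_diffA_entry:
  assumes "u \<in> domD"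
  shows "(hessB u ** diffA q r u) $ i $ j
    = (if i = j then (qfun q u i - qfun r u i) / u $ i else 0) + (q + r) $ i $ j"
proof -
  have ui: "u $ i > 0" and u0: "u0 u > 0"
    using assms by (simp_all add: domD_def u0_def)
  have "(hessB u ** diffA q r u) $ i $ j
      = (\<Sum>k\<in>UNIV. (if k = i then diffA q r u $ i $ j / u $ i else 0) + diffA q r u $ k $ j / u0 u)"
    by (auto simp: matrix_matrix_mult_def hessB_def distrib_right intro!: sum.cong)
  also have "\<dots> = diffA q r u $ i $ j / u $ i + (\<Sum>k\<in>UNIV. diffA q r u $ k $ j) / u0 u"
    by (simp add: sum.distrib sum_divide_distrib)
  also have "\<dots> = (if i = j then (qfun q u i - qfun r u i) / u $ i else 0) + (q + r) $ i $ j"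
    using ui u0 unfolding sum_diffA_column by (cases "i = j") (simp_all add: diffA_def field_simps)
  finally show ?thesis .
qed

lemma qfun_mono:
  assumes "\<And>j. r $ i $ j \<le> q $ i $ j" and "\<And>j. 0 \<le> u $ j"
  shows "qfun r u i \<le> qfun q u i"
  unfolding qfun_def using assms by (intro sum_mono mult_right_mono) auto

theorem lemma8:
  fixes q r :: "real^'n^'n" and \<alpha> :: real
  assumes q_nonneg: "\<And>i j. q $ i $ j \<ge> 0"
    and r_nonneg: "\<And>i j. r $ i $ j \<ge> 0"
    and r_sym: "\<And>i j. r $ i $ j = r $ j $ i"
    and r_diag: "\<And>i. r $ i $ i = 0"
    and posdef: "pos_def (sym_part (q + r))"
    and alpha: "smallest_eigenvalue (sym_part (q + r)) \<alpha>"
    and alpha_pos: "\<alpha> > 0"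
    and q_ge_r: "\<And>i j. q $ i $ j \<ge> r $ i $ j"
    and u: "u \<in> domD"
  shows "z \<bullet> ((hessB u ** diffA q r u) *v z) \<ge> \<alpha> * (norm z)\<^sup>2"
proof -
  let ?d = "\<lambda>i. (qfun q u i - qfun r u i) / u $ i"
  have u_pos: "0 < u $ j" for j using u by (simp add: domD_def)
  have "z \<bullet> ((hessB u ** diffA q r u) *v z) = (\<Sum>i\<in>UNIV. ?d i * (z $ i)\<^sup>2) + z \<bullet> ((q + r) *v z)"
    using hessB_diffA_entry[OF u] by (rule quadratic_form_diagonal_plus)
  moreover have "0 \<le> (\<Sum>i\<in>UNIV. ?d i * (z $ i)\<^sup>2)"
    using qfun_mono[OF q_ge_r less_imp_le[OF u_pos]] u_pos
    by (intro sum_nonneg mult_nonneg_nonneg divide_nonneg_pos) auto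
  moreover have "\<alpha> * (norm z)\<^sup>2 \<le> z \<bullet> ((q + r) *v z)"
    using quadratic_form_ge_smallest_eigenvalue[OF transpose_sym_part alpha]
    by (simp add: quadratic_form_sym_part)
  ultimately show ?thesis by linarith
qed

end
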